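(* Consider the linear system $\dot x=(A+\theta_1C_1+\dots+\theta_lC_l)x+Bu$, $x\in\mathbb{R}^n$, $u\in\mathbb{R}^m$, with constant matrices $A,C_1,\dots,C_l\in\mathbb{R}^{n\times n}$, $B\in\mathbb{R}^{n\times m}$ and constant unknown $\theta=(\theta_1,\dots,\theta_l)'\in\mathbb{R}^l$. Let $K_\vartheta\in\mathbb{R}^{m\times n}$, $\vartheta\in\mathbb{R}^l$, be a family of gain matrices. Suppose there exist constants $\omega_\vartheta>0$ ($\vartheta\in\mathbb{R}^l$) and a continuous map $M:\mathbb{R}^l\to[1,+\infty)$ such that $|\exp(t(A+\vartheta_1C_1+\dots+\vartheta_lC_l+BK_\vartheta))|\le e^{-\omega_\vartheta t}M(\vartheta)$ for all $t\ge0$, $\vartheta\in\mathbb{R}^l$. Suppose also that for all $\theta,\hat\theta,\vartheta\in\mathbb{R}^l$ with $\hat\theta\ne\theta$ and $\vartheta\ne0$, the pair $(A+\theta_1C_1+\dots+\theta_lC_l+BK_{\hat\theta},\ \vartheta_1C_1+\dots+\vartheta_lC_l)$ is observable. Let $a>0$, $T>0$ and let $\tilde N>1$ be an integer. Then there exist constants $\tilde M_{\theta,\hat\theta}>0$, $(\theta,\hat\theta)\in\mathbb{R}^l\times\mathbb{R}^l$, such that for every $\theta,\hat\theta_0\in\mathbb{R}^l$, $x_0\in\mathbb{R}^n$, the solution of the hybrid closed-loop system described in the context with $x(0)=x_0$, $\hat\theta(0)=\hat\theta_0$, $z(0)=0$, $w(0)=0$ satisfies $|x(t)|\le\tilde M_{\theta,\hat\theta_0}e^{-\omega_\theta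 t}|x_0|$ for all $t\ge0$. Moreover, if $x_0\ne0$ then $\hat\theta(t)=\theta$ for all $t\ge T$.
   Context: Let $L:\mathbb{R}^n\to\mathbb{R}^{n\times l}$ be the linear map $L(x)=C_1xe_1'+\dots+C_lxe_l'$ (the $n\times l$ matrix with columns $C_1x,\dots,C_lx$), $e_1,\dots,e_l$ the standard basis of $\mathbb{R}^l$. Hybrid closed-loop system: event times $\tau_0=0$, $\tau_{i+1}=\min(\tau_i+T,r_i)$. On $[\tau_i,\tau_{i+1})$: $u(t)=K_{\hat\theta(\tau_i)}x(t)$, $\hat\theta(t)=\hat\theta(\tau_i)$, and $x$ is continuous and solves the system. Trigger: for $x(\tau_i)\ne0$, $r_i=\inf\{t>\tau_i:|x(t)|=|x(\tau_i)|\sqrt{a+M^2(\hat\theta(\tau_i))}\}$ ($\inf\emptyset=+\infty$); for $x(\tau_i)=0$, $r_i=\tau_i+T$. Auxiliary signals: $\dot z=x$, $\dot w=u$, $y=x-Az-Bw$ ($z\in\mathbb{R}^n$, $w\in\mathbb{R}^m$). Set $\mu_{i+1}=\min\{\tau_j:j\in\{0,\dots,i\},\tau_j\ge\tau_{i+1}-\tilde NT\}$, and for $\mu<\tau$, $q(\tau,\mu)=\int_\mu^\tau\int_\mu^\tau(L(z(t)-z(\sigma)))'(y(t)-y(\sigma))\,d\sigma\,dt$, $Q(\tau,\mu)=\int_\mu^\tau\int_\mu^\tau(L(z(t)-z(\sigma)))'(L(z(t)-z(\sigma)))\,d\sigma\,dt$. Update: $\hat\theta(\tau_{i+1})=\arg\min\{|\vartheta-\hat\theta(\tau_i)|^2:\vartheta\in\mathbb{R}^l,\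 q(\tau_{i+1},\mu_{i+1})=Q(\tau_{i+1},\mu_{i+1})\vartheta\}$. A pair $(F,H)$ of $n\times n$ matrices is observable if $He^{Ft}x_0=0$ for all $t$ in an interval $[0,\tau]$, $\tau>0$, implies $x_0=0$. *)

theory Defs
  imports "HOL-Analysis.Analysis"
begin

primrec mat_pow :: "real^'n^'n \<Rightarrow> nat \<Rightarrow> real^'n^'n" where
  "mat_pow F 0 = mat 1"
| "mat_pow F (Suc k) = F ** mat_pow F k"

definition mat_exp :: "real^'n^'n \<Rightarrow> real^'n^'n" where
  "mat_exp F = (\<Sum>k. (1 / fact k) *\<^sub>R mat_pow F k)"

definition mat_norm :: "real^'n^'m \<Rightarrow> real" where
  "mat_norm E = onorm (\<lambda>v. E *v v)"

definition observable :: "real^'n^'n \<Rightarrow> real^'n^'n \<Rightarrow> bool" where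
  "observable F H \<longleftrightarrow>
     (\<forall>x0 \<tau>. \<tau> > 0 \<and> (\<forall>t\<in>{0..\<tau>}. H *v (mat_exp (t *\<^sub>R F) *v x0) = 0) \<longrightarrow> x0 = 0)"

definition Apar :: "real^'n^'n \<Rightarrow> ('l::finite \<Rightarrow> real^'n^'n) \<Rightarrow> real^'l \<Rightarrow> real^'n^'n" where
  "Apar A C \<theta> = A + (\<Sum>k\<in>UNIV. (\<theta> $ k) *\<^sub>R C k)"

definition Lmap :: "('l::finite \<Rightarrow> real^'n^'n) \<Rightarrow> real^'n \<Rightarrow> real^'l^'n" where
  "Lmap C v = (\<chi> i k. (C k *v v) $ i)"

definition qfun :: "('l::finite \<Rightarrow> real^'n^'n) \<Rightarrow> (real \<Rightarrow> real^'n) \<Rightarrow> (real \<Rightarrow> real^'n)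
                    \<Rightarrow> real \<Rightarrow> real \<Rightarrow> real^'l" where
  "qfun C z y \<tau> \<mu> = integral {\<mu>..\<tau>} (\<lambda>t. integral {\<mu>..\<tau>} (\<lambda>\<sigma>.
      transpose (Lmap C (z t - z \<sigma>)) *v (y t - y \<sigma>)))"

definition Qfun :: "('l::finite \<Rightarrow> real^'n^'n) \<Rightarrow> (real \<Rightarrow> real^'n)
                    \<Rightarrow> real \<Rightarrow> real \<Rightarrow> real^'l^'l" where
  "Qfun C z \<tau> \<mu> = integral {\<mu>..\<tau>} (\<lambda>t. integral {\<mu>..\<tau>} (\<lambda>\<sigma>.
      transpose (Lmap C (z t - z \<sigma>)) ** Lmap C (z t - z \<sigma>)))"

text \<open>
  The solution of the hybrid closed-loop system on [0,+infinity), with event times tau,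
  state x, input u, parameter estimate th, for true parameter theta, initial
  conditions x(0)=x0, th(0)=th0, z(0)=0, w(0)=0 (z, w are given by integrals).
  Inf of the empty set is +infinity, encoded by the case distinction.
\<close>

definition hybrid_solution ::
  "real^'n^'n \<Rightarrow> real^'m^'n \<Rightarrow> ('l::finite \<Rightarrow> real^'n^'n) \<Rightarrow> (real^'l \<Rightarrow> real^'n^'m)
   \<Rightarrow> (real^'l \<Rightarrow> real) \<Rightarrow> real \<Rightarrow> real \<Rightarrow> nat
   \<Rightarrow> real^'l \<Rightarrow> real^'n \<Rightarrow> real^'l
   \<Rightarrow> (nat \<Rightarrow> real) \<Rightarrow> (real \<Rightarrow> real^'n) \<Rightarrow> (real \<Rightarrow> real^'m) \<Rightarrow> (real \<Rightarrow> real^'l) \<Rightarrow> bool" where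
  "hybrid_solution A B C K M a T N \<theta> x0 th0 \<tau> x u th \<longleftrightarrow>
     (let z = (\<lambda>t. integral {0..t} x);
          w = (\<lambda>t. integral {0..t} u);
          y = (\<lambda>t. x t - A *v z t - B *v w t);
          r = (\<lambda>i. if x (\<tau> i) = 0 then \<tau> i + T
                    else (let S = {t. t > \<tau> i \<and>
                                 norm (x t) = norm (x (\<tau> i)) * sqrt (a + (M (th (\<tau> i)))\<^sup>2)}
                          in if S = {} then \<tau> i + T else min (\<tau> i + T) (Inf S)));
          \<mu> = (\<lambda>i. Min (\<tau> ` {j. j \<le> i \<and> \<tau> j \<ge> \<tau> (Suc i) - real N * T}))
      in
        \<tau> 0 = 0
      \<and> (\<forall>i. \<tau> (Suc i) = min (\<tau> i + T) (r i))
      \<and> filterlim \<tau> at_top sequentially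
      \<and> x 0 = x0 \<and> th 0 = th0
      \<and> continuous_on {0..} x
      \<and> (\<forall>i. \<forall>t\<in>{\<tau> i..<\<tau> (Suc i)}.
            u t = K (th (\<tau> i)) *v x t
          \<and> th t = th (\<tau> i)
          \<and> (x has_vector_derivative (Apar A C \<theta> *v x t + B *v u t)) (at t within {\<tau> i..\<tau> (Suc i)}))
      \<and> (\<forall>i. qfun C z y (\<tau> (Suc i)) (\<mu> i) = Qfun C z (\<tau> (Suc i)) (\<mu> i) *v th (\<tau> (Suc i))
          \<and> (\<forall>v. qfun C z y (\<tau> (Suc i)) (\<mu> i) = Qfun C z (\<tau> (Suc i)) (\<mu> i) *v v
                 \<longrightarrow> (norm (th (\<tau> (Suc i)) - th (\<tau> i)))\<^sup>2 \<le> (norm (v - th (\<tau> i)))\<^sup>2)))"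

end

theory Submission
  imports Defs
begin

text \<open>
  Between events the state is a free motion of the closed loop built with the current estimate,
  and the trigger keeps \<open>|x|\<close> below \<open>\<surd>(a + M(\<theta>\<^sub>i)\<^sup>2) |x(\<tau>\<^sub>i)|\<close>. Integrating the dynamics gives
  \<open>y t - y \<sigma> = L(z t - z \<sigma>) \<theta>\<close>, so the true \<open>\<theta>\<close> solves every identification equation
  \<open>q = Q \<theta>\<close>; since the update picks the solution closest to the previous estimate, an exact
  estimate stays exact. At the first event \<open>\<tau>\<^sub>1 \<le> T\<close> the error \<open>v\<close> satisfies \<open>v' Q v = 0\<close>, and
  \<open>v' Q v\<close> is the double integral of \<open>|L(z t - z \<sigma>) v|\<^sup>2\<close>; hence \<open>(v\<^sub>1 C\<^sub>1 + \<dots> + v\<^sub>l C\<^sub>l) x\<close>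
  vanishes along a free motion on \<open>[0, \<tau>\<^sub>1]\<close>, and observability forces \<open>v = 0\<close> unless
  \<open>x0 = 0\<close>. From \<open>\<tau>\<^sub>1\<close> on the loop is the stable one designed for \<open>\<theta>\<close>, and the
  factor \<open>exp (\<omega> T)\<close> absorbs the delay.
\<close>

lemma matrix_add_rdistrib: "((A::real^'n^'m) + B) ** C = A ** C + B ** C"
  by (vector matrix_matrix_mult_def sum.distrib[symmetric] field_simps)

lemma onorm_matrix_add: "onorm ((*v) ((A::real^'n^'m) + B)) \<le> onorm ((*v) A) + onorm ((*v) B)"
proof -
  have "(*v) (A + B) = (\<lambda>v. A *v v + B *v v)"
    by (simp add: fun_eq_iff matrix_vector_mult_add_rdistrib)
  then show ?thesis
    using onorm_triangle[OF matrix_vector_mul_bounded_linear matrix_vector_mul_bounded_linear] by simp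
qed

lemma onorm_matrix_scaleR: "onorm ((*v) (r *\<^sub>R (A::real^'n^'m))) = \<bar>r\<bar> * onorm ((*v) A)"
proof -
  have "(*v) (r *\<^sub>R A) = (\<lambda>v. r *\<^sub>R (A *v v))"
    by (simp add: fun_eq_iff scaleR_matrix_vector_assoc)
  then show ?thesis using onorm_scaleR[OF matrix_vector_mul_bounded_linear] by simp
qed

lemma onorm_matrix_mult: "onorm ((*v) ((A::real^'n^'m) ** B)) \<le> onorm ((*v) A) * onorm ((*v) B)"
proof -
  have "(*v) (A ** B) = (*v) A \<circ> (*v) B" by (simp add: fun_eq_iff matrix_vector_mul_assoc)
  then show ?thesis
    using onorm_compose[OF matrix_vector_mul_bounded_linear matrix_vector_mul_bounded_linear] by simp
qed

lemma onorm_matrix_one: "onorm ((*v) (mat 1 :: real^'n^'n)) = 1"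
proof -
  have "(*v) (mat 1 :: real^'n^'n) = (\<lambda>v. v)" by (simp add: fun_eq_iff)
  then show ?thesis by (simp add: onorm_id)
qed

lemma norm_le_onorm_matrix: "norm (A::real^'n^'m) \<le> real CARD('m) * real CARD('n) * onorm ((*v) A)"
proof -
  have "norm A \<le> (\<Sum>i\<in>UNIV. norm (A $ i))"
    unfolding norm_vec_def by (rule L2_set_le_sum) simp
  also have "\<dots> \<le> (\<Sum>i\<in>UNIV. \<Sum>j\<in>UNIV. \<bar>A $ i $ j\<bar>)"
    by (intro sum_mono norm_le_l1_cart)
  also have "\<dots> \<le> (\<Sum>i\<in>(UNIV::'m set). \<Sum>j\<in>(UNIV::'n set). onorm ((*v) A))"
    by (intro sum_mono matrix_component_le_onorm)
  finally show ?thesis by simp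
qed

lemma onorm_matrix_le_norm: "onorm ((*v) (A::real^'n^'m)) \<le> real CARD('m) * real CARD('n) * norm A"
proof (rule onorm_le_matrix_component)
  fix i j
  have "\<bar>A $ i $ j\<bar> \<le> norm (A $ i)" by (rule component_le_norm_cart)
  also have "\<dots> \<le> norm A" by (rule Finite_Cartesian_Product.norm_nth_le)
  finally show "\<bar>A $ i $ j\<bar> \<le> norm A" .
qed

text \<open>
  Square matrices under the operator norm form a Banach algebra; the copy \<open>'n sqm\<close> of
  \<open>real^'n^'n\<close> carries this structure, so that \<open>mat_exp\<close> becomes the
  library exponential \<open>exp\<close> of this algebra.
\<close>

typedef ('n::finite) sqm = "UNIV :: (real^'n^'n) set" morphisms mrep Sq by simp
setup_lifting type_definition_sqm

instantiation sqm :: (finite) real_algebra_1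
begin
lift_definition zero_sqm :: "'a sqm" is "0" .
lift_definition one_sqm :: "'a sqm" is "mat 1" .
lift_definition plus_sqm :: "'a sqm \<Rightarrow> 'a sqm \<Rightarrow> 'a sqm" is "(+)" .
lift_definition minus_sqm :: "'a sqm \<Rightarrow> 'a sqm \<Rightarrow> 'a sqm" is "(-)" .
lift_definition uminus_sqm :: "'a sqm \<Rightarrow> 'a sqm" is "uminus" .
lift_definition times_sqm :: "'a sqm \<Rightarrow> 'a sqm \<Rightarrow> 'a sqm" is "(**)" .
lift_definition scaleR_sqm :: "real \<Rightarrow> 'a sqm \<Rightarrow> 'a sqm" is "(*\<^sub>R)" .
instance
proof
  fix a b c :: "'a sqm" and r s :: real
  show "a + b + c = a + (b + c)" by transfer (simp add: algebra_simps)
  show "a + b = b + a" by transfer (simp add: algebra_simps)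
  show "0 + a = a" by transfer simp
  show "- a + a = 0" by transfer simp
  show "a - b = a + - b" by transfer simp
  show "r *\<^sub>R (a + b) = r *\<^sub>R a + r *\<^sub>R b" by transfer (simp add: algebra_simps)
  show "(r + s) *\<^sub>R a = r *\<^sub>R a + s *\<^sub>R a" by transfer (simp add: algebra_simps)
  show "r *\<^sub>R s *\<^sub>R a = (r * s) *\<^sub>R a" by transfer simp
  show "1 *\<^sub>R a = a" by transfer simp
  show "a * b * c = a * (b * c)" by transfer (simp add: matrix_mul_assoc)
  show "(a + b) * c = a * c + b * c" by transfer (simp add: matrix_add_rdistrib)
  show "a * (b + c) = a * b + a * c" by transfer (simp add: matrix_add_ldistrib)
  show "r *\<^sub>R a * b = r *\<^sub>R (a * b)" by transfer (simp add: scalar_matrix_assoc)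
  show "a * r *\<^sub>R b = r *\<^sub>R (a * b)" by transfer (simp add: matrix_scalar_ac scalar_matrix_assoc)
  show "1 * a = a" by transfer simp
  show "a * 1 = a" by transfer simp
  show "(0::'a sqm) \<noteq> 1"
  proof transfer
    obtain i :: 'a where True by simp
    have "(mat 1 :: real^'a^'a) $ i $ i = 1" by (simp add: mat_def)
    then show "(0::real^'a^'a) \<noteq> mat 1" by (metis zero_index zero_neq_one)
  qed
qed
end

instantiation sqm :: (finite) real_normed_algebra_1
begin
lift_definition norm_sqm :: "'a sqm \<Rightarrow> real" is "\<lambda>A. onorm ((*v) A)" .
definition sgn_sqm :: "'a sqm \<Rightarrow> 'a sqm" where "sgn_sqm x = x /\<^sub>R norm x"
definition dist_sqm :: "'a sqm \<Rightarrow> 'a sqm \<Rightarrow> real" where "dist_sqm x y = norm (x - y)"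
definition uniformity_sqm :: "('a sqm \<times> 'a sqm) filter" where
  "uniformity_sqm = (INF e\<in>{0 <..}. principal {(x, y). dist x y < e})"
definition open_sqm :: "'a sqm set \<Rightarrow> bool" where
  "open_sqm U \<longleftrightarrow> (\<forall>x\<in>U. eventually (\<lambda>(x', y). x' = x \<longrightarrow> y \<in> U) uniformity)"
instance
proof
  fix a b :: "'a sqm" and r :: real
  show "(norm a = 0) = (a = 0)"
    by transfer (simp add: onorm_eq_0[OF matrix_vector_mul_bounded_linear] fun_eq_iff matrix_eq)
  show "norm (a + b) \<le> norm a + norm b" by transfer (rule onorm_matrix_add)
  show "norm (r *\<^sub>R a) = \<bar>r\<bar> * norm a" by transfer (rule onorm_matrix_scaleR)
  show "norm (a * b) \<le> norm a * norm b" by transfer (rule onorm_matrix_mult)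
  show "norm (1::'a sqm) = 1" by transfer (rule onorm_matrix_one)
qed (simp_all add: sgn_sqm_def dist_sqm_def uniformity_sqm_def open_sqm_def)
end

lemma bounded_linear_mrep: "bounded_linear (mrep :: 'n::finite sqm \<Rightarrow> real^'n^'n)"
proof (rule bounded_linear_intro)
  fix x y :: "'n sqm" and r :: real
  show "mrep (x + y) = mrep x + mrep y" by (simp add: plus_sqm.rep_eq)
  show "mrep (r *\<^sub>R x) = r *\<^sub>R mrep x" by (simp add: scaleR_sqm.rep_eq)
  show "norm (mrep x) \<le> norm x * (real CARD('n) * real CARD('n))"
    using norm_le_onorm_matrix[of "mrep x"] by (simp add: norm_sqm.rep_eq mult.commute)
qed

lemma bounded_linear_Sq: "bounded_linear (Sq :: real^'n^'n \<Rightarrow> 'n::finite sqm)"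
proof (rule bounded_linear_intro)
  fix A B :: "real^'n^'n" and r :: real
  show "Sq (A + B) = Sq A + Sq B" by (simp add: plus_sqm.abs_eq)
  show "Sq (r *\<^sub>R A) = r *\<^sub>R Sq A" by (simp add: scaleR_sqm.abs_eq)
  show "norm (Sq A) \<le> norm A * (real CARD('n) * real CARD('n))"
    using onorm_matrix_le_norm[of A] by (simp add: norm_sqm.abs_eq mult.commute)
qed

instance sqm :: (finite) banach
proof
  fix X :: "nat \<Rightarrow> 'a sqm"
  assume "Cauchy X"
  then have "Cauchy (\<lambda>n. mrep (X n))" by (rule bounded_linear.Cauchy[OF bounded_linear_mrep])
  then obtain L where "(\<lambda>n. mrep (X n)) \<longlonglongrightarrow> L" by (auto simp: Cauchy_convergent_iff convergent_def)
  then have "(\<lambda>n. Sq (mrep (X n))) \<longlonglongrightarrow> Sq L" by (rule bounded_linear.tendsto[OF bounded_linear_Sq])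
  then show "convergent X" by (auto simp: convergent_def mrep_inverse)
qed

lemma mat_pow_eq_power: "mat_pow F k = mrep (Sq F ^ k)"
  by (induct k) (simp_all add: one_sqm.rep_eq times_sqm.rep_eq Sq_inverse)

lemma mat_exp_eq_exp: "mat_exp F = mrep (exp (Sq F))"
proof -
  have "mrep (exp (Sq F)) = mrep (\<Sum>k. (1 / fact k) *\<^sub>R Sq F ^ k)"
    by (simp add: exp_def scaleR_conv_of_real divide_inverse mult.commute)
  also have "\<dots> = (\<Sum>k. mrep ((1 / fact k) *\<^sub>R Sq F ^ k))"
    using bounded_linear.suminf[OF bounded_linear_mrep summable_exp_generic[of "Sq F"]]
    by (simp add: divide_inverse mult.commute)
  also have "\<dots> = mat_exp F"
    by (simp add: mat_exp_def scaleR_sqm.rep_eq mat_pow_eq_power)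
  finally show ?thesis by simp
qed

lemma mat_exp_scaleR: "mat_exp (r *\<^sub>R F) = mrep (exp (r *\<^sub>R Sq F))"
  by (simp add: mat_exp_eq_exp scaleR_sqm.abs_eq)

lemma bounded_bilinear_mrep_mult_vec:
  "bounded_bilinear (\<lambda>(G::'n::finite sqm) v. mrep G *v v)"
proof
  fix G G' :: "'n sqm" and v v' :: "real^'n" and r :: real
  show "mrep (G + G') *v v = mrep G *v v + mrep G' *v v"
    by (simp add: plus_sqm.rep_eq matrix_vector_mult_add_rdistrib)
  show "mrep G *v (v + v') = mrep G *v v + mrep G *v v'"
    by (simp add: matrix_vector_right_distrib)
  show "mrep (r *\<^sub>R G) *v v = r *\<^sub>R (mrep G *v v)"
    by (simp add: scaleR_sqm.rep_eq scaleR_matrix_vector_assoc)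
  show "mrep G *v (r *\<^sub>R v) = r *\<^sub>R (mrep G *v v)"
    by (simp add: matrix_scaleR_vector_ac scaleR_matrix_vector_assoc)
  show "\<exists>K. \<forall>G v. norm (mrep G *v v) \<le> norm G * norm v * K"
    by (rule exI[of _ 1]) (simp add: norm_sqm.rep_eq onorm[OF matrix_vector_mul_bounded_linear])
qed

text \<open>\<open>r \<mapsto> exp ((t - r) F) x r\<close> has derivative zero along a solution of \<open>x' = F x\<close>.\<close>

lemma linear_ode_solution:
  fixes F :: "real^'n^'n" and x :: "real \<Rightarrow> real^'n"
  assumes "finite S" "s \<le> t" and cont: "continuous_on {s..t} x"
    and deriv: "\<And>r. r \<in> {s<..<t} - S \<Longrightarrow> (x has_vector_derivative F *v x r) (at r)"
  shows "x t = mat_exp ((t - s) *\<^sub>R F) *v x s"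
proof -
  define E where "E r = exp ((t - r) *\<^sub>R Sq F)" for r
  define g where "g r = mrep (E r) *v x r" for r
  have dE: "(E has_vector_derivative - (E r * Sq F)) (at r)" for r
  proof -
    have "((\<lambda>r. t - r) has_vector_derivative -1) (at r)"
      by (auto intro!: derivative_eq_intros simp: has_real_derivative_iff_has_vector_derivative[symmetric])
    from vector_diff_chain_at[OF this exp_scaleR_has_vector_derivative_right[of "Sq F"]]
    show ?thesis unfolding E_def by (simp add: o_def)
  qed
  have "continuous_on {s..t} E"
    by (intro continuous_at_imp_continuous_on ballI has_vector_derivative_continuous[OF dE])
  then have g_cont: "continuous_on {s..t} g"
    unfolding g_def by (rule bounded_bilinear.continuous_on[OF bounded_bilinear_mrep_mult_vec _ cont])
  have g_deriv: "(g has_vector_derivative 0) (at r)" if "r \<in> {s<..<t} - S" for r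
  proof -
    have "(g has_vector_derivative
        mrep (E r) *v (F *v x r) + mrep (- (E r * Sq F)) *v x r) (at r)"
      unfolding g_def
      by (rule bounded_bilinear.has_vector_derivative[OF bounded_bilinear_mrep_mult_vec dE deriv[OF that]])
    moreover have "mrep (- (E r * Sq F)) *v x r = - ((mrep (E r) ** F) *v x r)"
      by (simp add: times_sqm.rep_eq uminus_sqm.rep_eq Sq_inverse vec_eq_iff
          matrix_vector_mult_def sum_negf)
    then have "mrep (E r) *v (F *v x r) + mrep (- (E r * Sq F)) *v x r = 0"
      by (simp add: matrix_vector_mul_assoc)
    ultimately show ?thesis by simp
  qed
  have "((\<lambda>r. 0) has_integral (g t - g s)) {s..t}"
    by (rule fundamental_theorem_of_calculus_interior_strong[OF \<open>finite S\<close> \<open>s \<le> t\<close> g_deriv g_cont])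
  then have "g t = g s" by (simp add: has_integral_0_eq)
  then show ?thesis by (simp add: g_def E_def mat_exp_scaleR one_sqm.rep_eq)
qed

lemma bounded_linear_matrix_vector_mult_left: "bounded_linear (\<lambda>E::real^'n^'m. E *v v)"
  by (simp add: linear_conv_bounded_linear[symmetric] linear_iff matrix_vector_mult_add_rdistrib
      scaleR_matrix_vector_assoc)

lemma Lmap_mult_vec: "Lmap C v *v \<theta> = (\<Sum>k\<in>UNIV. (\<theta> $ k) *\<^sub>R C k) *v v"
proof -
  have "Lmap C v *v \<theta> = (\<Sum>k\<in>UNIV. (\<theta> $ k) *\<^sub>R (C k *v v))"
    by (simp add: vec_eq_iff Lmap_def matrix_vector_mult_def sum_component mult.commute)
  also have "\<dots> = (\<Sum>k\<in>UNIV. (\<theta> $ k) *\<^sub>R C k) *v v"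
    using linear_sum[OF bounded_linear.linear[OF bounded_linear_matrix_vector_mult_left[of v]],
        of "\<lambda>k. (\<theta> $ k) *\<^sub>R C k" UNIV]
    by (simp add: o_def scaleR_matrix_vector_assoc)
  finally show ?thesis .
qed

lemma bounded_linear_Lmap: "bounded_linear (Lmap C)"
  unfolding linear_conv_bounded_linear[symmetric]
  by (simp add: linear_iff Lmap_def vec_eq_iff matrix_vector_right_distrib matrix_scaleR_vector_ac
      scaleR_matrix_vector_assoc[symmetric])

lemma integral_integral_bounded_linear:
  fixes G :: "real \<Rightarrow> real \<Rightarrow> 'a::euclidean_space" and h :: "'a \<Rightarrow> 'b::euclidean_space"
  assumes h: "bounded_linear h" and G: "continuous_on ({m..t} \<times> {m..t}) (\<lambda>(p, q). G p q)"
  shows "integral {m..t} (\<lambda>p. integral {m..t} (\<lambda>q. h (G p q)))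
       = h (integral {m..t} (\<lambda>p. integral {m..t} (\<lambda>q. G p q)))"
proof -
  have "integral {m..t} (\<lambda>q. h (G p q)) = h (integral {m..t} (G p))" if "p \<in> {m..t}" for p
  proof -
    have "continuous_on {m..t} (G p)"
      using continuous_on_o_Pair[OF G that] by (simp add: o_def)
    from integral_linear[OF integrable_continuous_interval[OF this] h] show ?thesis
      by (simp add: o_def)
  qed
  then have "integral {m..t} (\<lambda>p. integral {m..t} (\<lambda>q. h (G p q)))
      = integral {m..t} (\<lambda>p. h (integral {m..t} (G p)))"
    by (intro integral_cong) simp
  also have "\<dots> = h (integral {m..t} (\<lambda>p. integral {m..t} (G p)))"
  proof -
    have "continuous_on {m..t} (\<lambda>p. integral {m..t} (G p))"
      using integral_continuous_on_param[of "{m..t}" m t G] G by (simp add: cbox_interval)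
    from integral_linear[OF integrable_continuous_interval[OF this] h] show ?thesis
      by (simp add: o_def)
  qed
  finally show ?thesis by simp
qed

lemma integral_nonneg_eq_0_imp_eq_0:
  fixes f :: "real \<Rightarrow> real"
  assumes f: "continuous_on {a..b} f" and "\<And>x. x \<in> {a..b} \<Longrightarrow> 0 \<le> f x"
    and int0: "integral {a..b} f = 0" and "a < b" "x \<in> {a..b}"
  shows "f x = 0"
proof (rule has_integral_0_cbox_imp_0[of a b f])
  have "(f has_integral integral {a..b} f) {a..b}"
    by (rule integrable_integral[OF integrable_continuous_interval[OF f]])
  then show "(f has_integral 0) (cbox a b)" by (simp add: int0 cbox_interval)
qed (use assms in \<open>auto simp: cbox_interval box_real\<close>)

lemma double_integral_nonneg_eq_0_imp_eq_0:
  fixes g :: "real \<Rightarrow> real \<Rightarrow> real"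
  assumes g: "continuous_on ({a..b} \<times> {a..b}) (\<lambda>(p, q). g p q)" and "\<And>p q. 0 \<le> g p q"
    and "integral {a..b} (\<lambda>p. integral {a..b} (g p)) = 0" "a < b" "p \<in> {a..b}" "q \<in> {a..b}"
  shows "g p q = 0"
proof -
  have g_p: "continuous_on {a..b} (g p)" if "p \<in> {a..b}" for p
    using continuous_on_o_Pair[OF g that] by (simp add: o_def)
  have "integral {a..b} (g p) = 0"
  proof (rule integral_nonneg_eq_0_imp_eq_0[where f = "\<lambda>p. integral {a..b} (g p)"])
    show "continuous_on {a..b} (\<lambda>p. integral {a..b} (g p))"
      using integral_continuous_on_param[of "{a..b}" a b g] g by (simp add: cbox_interval)
    show "0 \<le> integral {a..b} (g p)" if "p \<in> {a..b}" for p
      using integrable_continuous_interval[OF g_p[OF that]] assms(2) by (rule integral_nonneg)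
  qed (use assms in auto)
  with g_p[OF \<open>p \<in> {a..b}\<close>] assms(2) show ?thesis
    using \<open>a < b\<close> \<open>q \<in> {a..b}\<close> by (rule integral_nonneg_eq_0_imp_eq_0)
qed

lemma integral_vanishing_imp_vanishing:
  fixes f :: "real \<Rightarrow> 'a::banach"
  assumes f: "continuous_on {a..b} f" and "a < b"
    and int0: "\<And>p. p \<in> {a..b} \<Longrightarrow> integral {a..p} f = 0" and p: "p \<in> {a..b}"
  shows "f p = 0"
proof -
  have "((\<lambda>u. integral {a..u} f) has_vector_derivative f p) (at p within {a..b})"
    by (rule integral_has_vector_derivative[OF f p])
  then have "((\<lambda>u. 0) has_vector_derivative f p) (at p within {a..b})"
    by (rule has_vector_derivative_transform[OF p, rotated]) (simp add: int0)
  then have "((\<lambda>u. 0) has_vector_derivative f p) (at p within cbox a b)"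
    by (simp add: cbox_interval)
  moreover have "((\<lambda>u. 0) has_vector_derivative 0) (at p within cbox a b)"
    by (rule has_vector_derivative_const)
  moreover have "p \<in> cbox a b" using p by (simp add: cbox_interval)
  ultimately show ?thesis
    using vector_derivative_unique_within_closed_interval[OF \<open>a < b\<close>] by blast
qed

locale hybrid_closed_loop =
  fixes A :: "real^'n::finite^'n" and B :: "real^'m::finite^'n" and C :: "'l::finite \<Rightarrow> real^'n^'n"
    and K :: "real^'l \<Rightarrow> real^'n^'m" and M :: "real^'l \<Rightarrow> real"
    and a T :: real and N :: nat and \<theta> :: "real^'l" and x0 :: "real^'n" and th0 :: "real^'l"
    and \<tau> :: "nat \<Rightarrow> real" and x :: "real \<Rightarrow> real^'n" and u :: "real \<Rightarrow> real^'m"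
    and th :: "real \<Rightarrow> real^'l"
  assumes solution: "hybrid_solution A B C K M a T N \<theta> x0 th0 \<tau> x u th"
    and a_pos: "0 < a" and T_pos: "0 < T" and N_ge_1: "1 \<le> N" and M_ge_1: "\<And>v. 1 \<le> M v"
begin

definition z_aux :: "real \<Rightarrow> real^'n" where "z_aux t = integral {0..t} x"
definition w_aux :: "real \<Rightarrow> real^'m" where "w_aux t = integral {0..t} u"
definition y_aux :: "real \<Rightarrow> real^'n" where "y_aux t = x t - A *v z_aux t - B *v w_aux t"

definition trigger_level :: "nat \<Rightarrow> real" where
  "trigger_level i = sqrt (a + (M (th (\<tau> i)))\<^sup>2)"

definition trigger_set :: "nat \<Rightarrow> real set" where
  "trigger_set i = {t. \<tau> i < t \<and> norm (x t) = norm (x (\<tau> i)) * trigger_level i}"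

definition trigger_time :: "nat \<Rightarrow> real" where
  "trigger_time i = (if x (\<tau> i) = 0 then \<tau> i + T
                     else if trigger_set i = {} then \<tau> i + T
                     else min (\<tau> i + T) (Inf (trigger_set i)))"

text \<open>\<open>window_start i\<close> is the paper's \<open>\<mu>\<^sub>i\<^sub>+\<^sub>1\<close>.\<close>

definition window_start :: "nat \<Rightarrow> real" where
  "window_start i = Min (\<tau> ` {j. j \<le> i \<and> \<tau> (Suc i) - real N * T \<le> \<tau> j})"

definition closed_loop_matrix :: "nat \<Rightarrow> real^'n^'n" where
  "closed_loop_matrix i = Apar A C \<theta> + B ** K (th (\<tau> i))"

lemma tau_0: "\<tau> 0 = 0"
  and tau_tendsto: "filterlim \<tau> at_top sequentially"
  and x_0: "x 0 = x0"
  and th_0: "th 0 = th0"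
  and x_continuous: "continuous_on {0..} x"
  using solution unfolding hybrid_solution_def Let_def by blast+

lemma tau_Suc: "\<tau> (Suc i) = min (\<tau> i + T) (trigger_time i)"
  using solution
  unfolding hybrid_solution_def Let_def trigger_time_def trigger_set_def trigger_level_def
  by blast

lemma on_event_interval:
  assumes "t \<in> {\<tau> i..<\<tau> (Suc i)}"
  shows "u t = K (th (\<tau> i)) *v x t" "th t = th (\<tau> i)"
    "(x has_vector_derivative (Apar A C \<theta> *v x t + B *v u t)) (at t within {\<tau> i..\<tau> (Suc i)})"
  using solution assms unfolding hybrid_solution_def Let_def by blast+

lemma estimate_update:
  "qfun C z_aux y_aux (\<tau> (Suc i)) (window_start i)
     = Qfun C z_aux (\<tau> (Suc i)) (window_start i) *v th (\<tau> (Suc i))"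
  "qfun C z_aux y_aux (\<tau> (Suc i)) (window_start i) = Qfun C z_aux (\<tau> (Suc i)) (window_start i) *v v
     \<Longrightarrow> (norm (th (\<tau> (Suc i)) - th (\<tau> i)))\<^sup>2 \<le> (norm (v - th (\<tau> i)))\<^sup>2"
  using solution
  unfolding hybrid_solution_def Let_def z_aux_def[abs_def] y_aux_def[abs_def] w_aux_def[abs_def]
    window_start_def
  by blast+

lemma trigger_level_gt_1: "1 < trigger_level i"
proof -
  have "1 \<le> (M (th (\<tau> i)))\<^sup>2" using M_ge_1 by (simp add: one_le_power)
  then have "1\<^sup>2 < a + (M (th (\<tau> i)))\<^sup>2" using a_pos by simp
  then show ?thesis unfolding trigger_level_def by (rule real_less_rsqrt)
qed

text \<open>By continuity of \<open>x\<close> the trigger cannot fire immediately: this excludes Zeno behaviour.\<close>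

lemma tau_less_trigger_time:
  assumes "0 \<le> \<tau> i" shows "\<tau> i < trigger_time i"
proof (cases "x (\<tau> i) = 0 \<or> trigger_set i = {}")
  case True then show ?thesis using T_pos by (auto simp: trigger_time_def)
next
  case False
  then have nz: "x (\<tau> i) \<noteq> 0" and ne: "trigger_set i \<noteq> {}" by auto
  define e where "e = norm (x (\<tau> i)) * (trigger_level i - 1)"
  have "0 < e" using nz trigger_level_gt_1[of i] by (simp add: e_def)
  then obtain d where "0 < d"
    and d: "\<forall>t\<in>{0..}. dist t (\<tau> i) < d \<longrightarrow> dist (x t) (x (\<tau> i)) < e"
    using x_continuous assms unfolding continuous_on_iff by (metis atLeast_iff)
  have "\<tau> i + d \<le> t" if t: "t \<in> trigger_set i" for t
  proof (rule ccontr)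
    assume "\<not> \<tau> i + d \<le> t"
    with t assms have "dist (x t) (x (\<tau> i)) < e"
      by (intro d[rule_format]) (auto simp: trigger_set_def dist_real_def)
    moreover have "norm (x t) \<le> norm (x (\<tau> i)) + dist (x t) (x (\<tau> i))"
      by (metis dist_commute dist_norm norm_triangle_sub add.commute)
    ultimately show False using t by (simp add: trigger_set_def e_def algebra_simps)
  qed
  then have "\<tau> i + d \<le> Inf (trigger_set i)" using ne by (intro cInf_greatest) auto
  then show ?thesis using False \<open>0 < d\<close> T_pos by (simp add: trigger_time_def)
qed

lemma tau_nonneg_less: "0 \<le> \<tau> i \<and> \<tau> i < \<tau> (Suc i)"
proof (induct i)
  case 0
  then show ?case using tau_less_trigger_time[of 0] tau_Suc[of 0] tau_0 T_pos by simp
next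
  case (Suc i)
  then show ?case using tau_less_trigger_time[of "Suc i"] tau_Suc[of "Suc i"] T_pos by simp
qed

lemma tau_nonneg: "0 \<le> \<tau> i" and tau_less_Suc: "\<tau> i < \<tau> (Suc i)"
  using tau_nonneg_less by auto

lemma tau_Suc_le: "\<tau> (Suc i) \<le> \<tau> i + T"
  using tau_Suc by simp

lemma strict_mono_tau: "strict_mono \<tau>"
  using tau_less_Suc by (simp add: strict_mono_Suc_iff)

lemma tau_1_le: "\<tau> 1 \<le> T"
  using tau_Suc_le[of 0] tau_0 by simp

lemma event_interval:
  assumes "0 \<le> t" obtains i where "\<tau> i \<le> t" "t < \<tau> (Suc i)"
proof -
  obtain n where "t < \<tau> n"
    using tau_tendsto unfolding filterlim_at_top_dense eventually_sequentially by blast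
  then have ex: "\<exists>n. t < \<tau> n" ..
  define n0 where "n0 = (LEAST n. t < \<tau> n)"
  have n0: "t < \<tau> n0" unfolding n0_def by (rule LeastI_ex[OF ex])
  then obtain i where i: "n0 = Suc i" using tau_0 assms by (cases n0) auto
  then have "\<not> t < \<tau> i" using not_less_Least[of i "\<lambda>n. t < \<tau> n"] unfolding n0_def by simp
  with n0 i show ?thesis by (intro that[of i]) simp_all
qed

lemma strictly_between_events:
  assumes "r < \<tau> (Suc i)" "0 \<le> r" "r \<notin> \<tau> ` {..i}"
  obtains j where "j \<le> i" "\<tau> j < r" "r < \<tau> (Suc j)"
proof -
  obtain j where j: "\<tau> j \<le> r" "r < \<tau> (Suc j)" using event_interval[OF assms(2)] by blast
  then have "j \<le> i" using assms(1) strict_mono_less[OF strict_mono_tau, of j "Suc i"] by linarith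
  with j assms(3) show ?thesis using that by (auto simp: le_less)
qed

lemma x_has_derivative_between_events:
  assumes "\<tau> i < r" "r < \<tau> (Suc i)"
  shows "(x has_vector_derivative Apar A C \<theta> *v x r + B *v u r) (at r)"
proof -
  have "at r within {\<tau> i..\<tau> (Suc i)} = at r"
    by (rule at_within_interior) (use assms in auto)
  with on_event_interval(3)[of r i] assms show ?thesis by simp
qed

lemma x_has_closed_loop_derivative:
  assumes "\<tau> i < r" "r < \<tau> (Suc i)"
  shows "(x has_vector_derivative closed_loop_matrix i *v x r) (at r)"
proof -
  have "u r = K (th (\<tau> i)) *v x r" using assms by (intro on_event_interval(1)) simp
  then have "Apar A C \<theta> *v x r + B *v u r = closed_loop_matrix i *v x r"
    by (simp add: closed_loop_matrix_def matrix_vector_mult_add_rdistrib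
        matrix_vector_mul_assoc)
  with x_has_derivative_between_events[OF assms] show ?thesis by simp
qed

lemma x_on_interval:
  assumes "t \<in> {\<tau> i..\<tau> (Suc i)}"
  shows "x t = mat_exp ((t - \<tau> i) *\<^sub>R closed_loop_matrix i) *v x (\<tau> i)"
proof (rule linear_ode_solution[of "{}"])
  show "continuous_on {\<tau> i..t} x"
    by (rule continuous_on_subset[OF x_continuous]) (use tau_nonneg[of i] in auto)
qed (use assms in \<open>auto intro: x_has_closed_loop_derivative\<close>)

lemma norm_x_le_trigger_level:
  assumes "x (\<tau> i) \<noteq> 0" and t: "t \<in> {\<tau> i..\<tau> (Suc i)}"
  shows "norm (x t) \<le> norm (x (\<tau> i)) * trigger_level i"
proof (rule ccontr)
  assume exceeds: "\<not> ?thesis"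
  have below: "norm (x (\<tau> i)) < norm (x (\<tau> i)) * trigger_level i"
    using assms trigger_level_gt_1[of i] by simp
  have "continuous_on {\<tau> i..t} (\<lambda>s. norm (x s))"
    by (intro continuous_on_norm continuous_on_subset[OF x_continuous]) (use tau_nonneg[of i] in auto)
  moreover have "\<tau> i \<le> t" using t by simp
  ultimately obtain s where s: "\<tau> i \<le> s" "s \<le> t" "norm (x s) = norm (x (\<tau> i)) * trigger_level i"
    using IVT'[of "\<lambda>s. norm (x s)" "\<tau> i" _ t] below exceeds by (metis less_eq_real_def not_le)
  moreover from s below exceeds have "s \<noteq> \<tau> i" "s \<noteq> t" by auto
  ultimately have "s \<in> trigger_set i" "s < t" by (auto simp: trigger_set_def)
  moreover have "bdd_below (trigger_set i)"
    unfolding bdd_below_def trigger_set_def by (rule exI[of _ "\<tau> i"]) auto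
  ultimately have "\<tau> (Suc i) \<le> s"
    using cInf_lower[of s "trigger_set i"] assms(1) tau_Suc[of i] by (auto simp: trigger_time_def)
  with \<open>s < t\<close> t show False by simp
qed

lemma x_eq_0_if_x0_eq_0:
  assumes "x0 = 0" "0 \<le> t" shows "x t = 0"
proof -
  have x_tau: "x (\<tau> i) = 0" for i
  proof (induct i)
    case 0 then show ?case using assms x_0 tau_0 by simp
  next
    case (Suc i) then show ?case
      using x_on_interval[of "\<tau> (Suc i)" i] tau_less_Suc[of i] by simp
  qed
  obtain i where "\<tau> i \<le> t" "t < \<tau> (Suc i)" using event_interval[OF assms(2)] .
  then show ?thesis using x_on_interval[of t i] x_tau by simp
qed

lemma u_integrable: assumes "0 \<le> t" shows "u integrable_on {0..t}"
proof -
  have u_int: "u integrable_on {0..\<tau> i}" for i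
  proof (induct i)
    case 0 then show ?case using integrable_on_refl[of u 0] by (simp add: tau_0 cbox_interval)
  next
    case (Suc i)
    have "continuous_on {\<tau> i..\<tau> (Suc i)} (\<lambda>s. K (th (\<tau> i)) *v x s)"
      by (intro bounded_linear.continuous_on[OF matrix_vector_mul_bounded_linear]
          continuous_on_subset[OF x_continuous]) (use tau_nonneg[of i] in auto)
    then have "u integrable_on {\<tau> i..\<tau> (Suc i)}"
      by (intro integrable_spike_finite[of "{\<tau> (Suc i)}" _ u, OF _ _ integrable_continuous_interval])
         (auto simp: on_event_interval(1))
    with Suc show ?case
      by (rule Henstock_Kurzweil_Integration.integrable_combine[OF tau_nonneg
          less_imp_le[OF tau_less_Suc]])
  qed
  obtain i where "t < \<tau> (Suc i)" using event_interval[OF assms] .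
  then have "{0..t} \<subseteq> {0..\<tau> (Suc i)}" by auto
  then show ?thesis by (rule integrable_on_subinterval[OF u_int])
qed

lemma x_eq_integral:
  assumes "0 \<le> t" shows "x t - x0 = Apar A C \<theta> *v z_aux t + B *v w_aux t"
proof -
  obtain i where i: "\<tau> i \<le> t" "t < \<tau> (Suc i)" using event_interval[OF assms] .
  have "((\<lambda>s. Apar A C \<theta> *v x s + B *v u s) has_integral (x t - x 0)) {0..t}"
  proof (rule fundamental_theorem_of_calculus_interior_strong[of "\<tau> ` {..i}"])
    fix r assume r: "r \<in> {0<..<t} - \<tau> ` {..i}"
    then obtain j where "\<tau> j < r" "r < \<tau> (Suc j)"
      using strictly_between_events[of r i] i by auto
    then show "(x has_vector_derivative Apar A C \<theta> *v x r + B *v u r) (at r)"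
      by (rule x_has_derivative_between_events)
  next
    show "continuous_on {0..t} x" by (rule continuous_on_subset[OF x_continuous]) auto
  qed (use assms in auto)
  moreover have "x integrable_on {0..t}"
    by (rule integrable_continuous_interval, rule continuous_on_subset[OF x_continuous]) auto
  then have "((\<lambda>s. Apar A C \<theta> *v x s + B *v u s) has_integral
      (Apar A C \<theta> *v z_aux t + B *v w_aux t)) {0..t}"
    unfolding z_aux_def w_aux_def
    by (intro has_integral_add has_integral_linear[OF _ matrix_vector_mul_bounded_linear, unfolded o_def]
        integrable_integral u_integrable assms)
  ultimately show ?thesis using has_integral_unique x_0 by simp
qed

lemma y_aux_diff:
  assumes "0 \<le> t" "0 \<le> s"
  shows "y_aux t - y_aux s = Lmap C (z_aux t - z_aux s) *v \<theta>"
proof -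
  have "y_aux t = x0 + (\<Sum>k\<in>UNIV. (\<theta> $ k) *\<^sub>R C k) *v z_aux t" if "0 \<le> t" for t
    using x_eq_integral[OF that] unfolding y_aux_def Apar_def
    by (simp add: matrix_vector_mult_add_rdistrib algebra_simps)
  then show ?thesis using assms by (simp add: Lmap_mult_vec matrix_vector_mult_diff_distrib)
qed

lemma z_aux_0: "z_aux 0 = 0"
  by (simp add: z_aux_def)

lemma z_aux_continuous: "continuous_on {0..b} z_aux"
proof -
  have "x integrable_on {0..b}"
    by (rule integrable_continuous_interval, rule continuous_on_subset[OF x_continuous]) auto
  then show ?thesis unfolding z_aux_def[abs_def] by (rule indefinite_integral_continuous_1)
qed

lemma Gram_integrand_continuous:
  assumes "0 \<le> m"
  shows "continuous_on ({m..t} \<times> {m..t})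
    (\<lambda>(p, q). transpose (Lmap C (z_aux p - z_aux q)) ** Lmap C (z_aux p - z_aux q))"
proof -
  have "continuous_on ({m..t} \<times> {m..t}) (\<lambda>pq. z_aux (fst pq) - z_aux (snd pq))"
    by (intro continuous_on_diff continuous_on_compose2[OF z_aux_continuous[of t]]
        continuous_on_fst continuous_on_snd) (use assms in auto)
  then have "continuous_on ({m..t} \<times> {m..t}) (\<lambda>pq. Lmap C (z_aux (fst pq) - z_aux (snd pq)))"
    by (rule bounded_linear.continuous_on[OF bounded_linear_Lmap])
  then show ?thesis
    unfolding case_prod_unfold matrix_matrix_mult_def transpose_def by (intro continuous_intros)
qed

lemma qfun_eq_Qfun_theta:
  assumes "0 \<le> m" shows "qfun C z_aux y_aux t m = Qfun C z_aux t m *v \<theta>"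
proof -
  have "qfun C z_aux y_aux t m = integral {m..t} (\<lambda>p. integral {m..t} (\<lambda>q.
      (transpose (Lmap C (z_aux p - z_aux q)) ** Lmap C (z_aux p - z_aux q)) *v \<theta>))"
    unfolding qfun_def
    by (intro integral_cong) (use assms in \<open>simp add: y_aux_diff matrix_vector_mul_assoc\<close>)
  also have "\<dots> = Qfun C z_aux t m *v \<theta>"
    unfolding Qfun_def
    by (rule integral_integral_bounded_linear[OF bounded_linear_matrix_vector_mult_left
          Gram_integrand_continuous[OF assms]])
  finally show ?thesis .
qed

lemma window_start_nonneg: "0 \<le> window_start i"
proof -
  have "T \<le> real N * T" using N_ge_1 T_pos by simp
  then have "i \<in> {j. j \<le> i \<and> \<tau> (Suc i) - real N * T \<le> \<tau> j}" using tau_Suc_le[of i] by simp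
  then have "window_start i \<in> \<tau> ` {j. j \<le> i \<and> \<tau> (Suc i) - real N * T \<le> \<tau> j}"
    unfolding window_start_def by (intro Min_in) auto
  then show ?thesis using tau_nonneg by auto
qed

lemma window_start_0: "window_start 0 = 0"
proof -
  have "T \<le> real N * T" using N_ge_1 T_pos by simp
  then have "{j. j \<le> 0 \<and> \<tau> 1 - real N * T \<le> \<tau> j} = {0}" using tau_1_le tau_0 by auto
  then show ?thesis unfolding window_start_def using tau_0 by simp
qed

lemma estimate_stays_exact:
  assumes "th (\<tau> i) = \<theta>" shows "th (\<tau> (Suc i)) = \<theta>"
proof -
  have "(norm (th (\<tau> (Suc i)) - th (\<tau> i)))\<^sup>2 \<le> (norm (\<theta> - th (\<tau> i)))\<^sup>2"
    by (rule estimate_update(2)) (rule qfun_eq_Qfun_theta[OF window_start_nonneg])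
  then show ?thesis using assms by simp
qed

lemma Qfun_kernel_imp_C_z_aux_constant:
  assumes "0 \<le> m" "m < t" and kernel: "Qfun C z_aux t m *v v = 0" and p: "p \<in> {m..t}"
  shows "(\<Sum>k\<in>UNIV. (v $ k) *\<^sub>R C k) *v (z_aux p - z_aux m) = 0"
proof -
  define h where "h E = v \<bullet> (E *v v)" for E :: "real^'l^'l"
  have h: "bounded_linear h"
    unfolding linear_conv_bounded_linear[symmetric] h_def
    by (simp add: linear_iff matrix_vector_mult_add_rdistrib scaleR_matrix_vector_assoc[symmetric]
        inner_add_right)
  define g where "g p q = (norm (Lmap C (z_aux p - z_aux q) *v v))\<^sup>2" for p q
  have h_Gram: "h (transpose (Lmap C (z_aux p - z_aux q)) ** Lmap C (z_aux p - z_aux q)) = g p q" for p q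
    unfolding h_def g_def power2_norm_eq_inner
    by (simp add: matrix_vector_mul_assoc[symmetric] inner_commute[of v] dot_lmul_matrix)
  have "continuous_on ({m..t} \<times> {m..t}) (\<lambda>(p, q). g p q)"
    using bounded_linear.continuous_on[OF h Gram_integrand_continuous[OF assms(1)]]
    by (simp add: case_prod_unfold h_Gram)
  moreover have "integral {m..t} (\<lambda>p. integral {m..t} (g p)) = h (Qfun C z_aux t m)"
    using integral_integral_bounded_linear[OF h Gram_integrand_continuous[OF assms(1)]]
    by (simp add: h_Gram Qfun_def)
  then have "integral {m..t} (\<lambda>p. integral {m..t} (g p)) = 0"
    by (simp add: h_def kernel)
  ultimately have "g p m = 0"
    using assms by (intro double_integral_nonneg_eq_0_imp_eq_0[of m t g]) (auto simp: g_def)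
  then show ?thesis by (simp add: g_def Lmap_mult_vec)
qed

lemma Qfun_kernel_imp_C_x_vanishes:
  assumes "0 < t" and kernel: "Qfun C z_aux t 0 *v v = 0" and p: "p \<in> {0..t}"
  shows "(\<Sum>k\<in>UNIV. (v $ k) *\<^sub>R C k) *v x p = 0"
proof -
  define H where "H = (\<Sum>k\<in>UNIV. (v $ k) *\<^sub>R C k)"
  have x_cont: "continuous_on {0..t} x" by (rule continuous_on_subset[OF x_continuous]) auto
  have "H *v x p = 0"
  proof (rule integral_vanishing_imp_vanishing[OF _ \<open>0 < t\<close> _ p])
    show "continuous_on {0..t} (\<lambda>s. H *v x s)"
      by (rule bounded_linear.continuous_on[OF matrix_vector_mul_bounded_linear x_cont])
    fix q assume q: "q \<in> {0..t}"
    then have "continuous_on {0..q} x" by (intro continuous_on_subset[OF x_cont]) auto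
    then have "integral {0..q} (\<lambda>s. H *v x s) = H *v z_aux q"
      using integral_linear[OF integrable_continuous_interval matrix_vector_mul_bounded_linear]
      by (simp add: o_def z_aux_def)
    also have "\<dots> = 0"
      using Qfun_kernel_imp_C_z_aux_constant[OF _ \<open>0 < t\<close> kernel q] by (simp add: H_def z_aux_0)
    finally show "integral {0..q} (\<lambda>s. H *v x s) = 0" .
  qed
  then show ?thesis by (simp add: H_def)
qed

context
  assumes x0_ne_0: "x0 \<noteq> 0"
    and observability: "\<And>\<theta>h v. \<theta>h \<noteq> \<theta> \<Longrightarrow> v \<noteq> 0 \<Longrightarrow>
      observable (Apar A C \<theta> + B ** K \<theta>h) (\<Sum>k\<in>UNIV. (v $ k) *\<^sub>R C k)"
begin

lemma estimate_exact_at_tau_1: "th (\<tau> 1) = \<theta>"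
proof (cases "th0 = \<theta>")
  case True
  then show ?thesis using estimate_stays_exact[of 0] tau_0 th_0 by simp
next
  case False
  show ?thesis
  proof (rule ccontr)
    define v where "v = th (\<tau> 1) - \<theta>"
    assume "th (\<tau> 1) \<noteq> \<theta>"
    then have "v \<noteq> 0" by (simp add: v_def)
    have "0 < \<tau> 1" using tau_less_Suc[of 0] tau_0 by simp
    have "Qfun C z_aux (\<tau> 1) 0 *v v = 0"
      using estimate_update(1)[of 0] qfun_eq_Qfun_theta[of 0 "\<tau> 1"] window_start_0
      by (simp add: v_def matrix_vector_mult_diff_distrib)
    moreover have "x p = mat_exp (p *\<^sub>R (Apar A C \<theta> + B ** K th0)) *v x0" if "p \<in> {0..\<tau> 1}" for p
      using x_on_interval[of p 0] that by (simp add: tau_0 closed_loop_matrix_def th_0 x_0)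
    ultimately have "\<forall>p\<in>{0..\<tau> 1}.
        (\<Sum>k\<in>UNIV. (v $ k) *\<^sub>R C k) *v (mat_exp (p *\<^sub>R (Apar A C \<theta> + B ** K th0)) *v x0) = 0"
      using Qfun_kernel_imp_C_x_vanishes[OF \<open>0 < \<tau> 1\<close>] by simp
    with observability[OF False \<open>v \<noteq> 0\<close>] \<open>0 < \<tau> 1\<close> have "x0 = 0"
      unfolding observable_def by blast
    with x0_ne_0 show False ..
  qed
qed

lemma estimate_exact_from_tau_1: "1 \<le> i \<Longrightarrow> th (\<tau> i) = \<theta>"
proof (induct i rule: dec_induct)
  case base
  show ?case by (rule estimate_exact_at_tau_1)
next
  case step
  show ?case by (rule estimate_stays_exact[OF step(3)])
qed

lemma estimate_exact_after_T: "T \<le> t \<Longrightarrow> th t = \<theta>"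
proof -
  assume "T \<le> t"
  then obtain i where i: "\<tau> i \<le> t" "t < \<tau> (Suc i)" using event_interval[of t] T_pos by auto
  with \<open>T \<le> t\<close> tau_1_le have "1 \<le> i" by (cases i) auto
  then show ?thesis using on_event_interval(2)[of t i] i estimate_exact_from_tau_1 by simp
qed

lemma x_after_tau_1:
  assumes "\<tau> 1 \<le> t"
  shows "x t = mat_exp ((t - \<tau> 1) *\<^sub>R (Apar A C \<theta> + B ** K \<theta>)) *v x (\<tau> 1)"
proof -
  obtain i where "t < \<tau> (Suc i)" using event_interval[of t] assms tau_nonneg[of 1] by auto
  show ?thesis
  proof (rule linear_ode_solution[of "\<tau> ` {..i}"])
    show "continuous_on {\<tau> 1..t} x"
      by (rule continuous_on_subset[OF x_continuous]) (use tau_nonneg[of 1] in auto)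
    fix r assume r: "r \<in> {\<tau> 1<..<t} - \<tau> ` {..i}"
    then obtain j where j: "\<tau> j < r" "r < \<tau> (Suc j)"
      using strictly_between_events[of r i] \<open>t < \<tau> (Suc i)\<close> tau_nonneg[of 1] by auto
    with r have "1 \<le> j" by (cases j) auto
    then have "closed_loop_matrix j = Apar A C \<theta> + B ** K \<theta>"
      by (simp add: closed_loop_matrix_def estimate_exact_from_tau_1)
    with x_has_closed_loop_derivative[OF j]
    show "(x has_vector_derivative (Apar A C \<theta> + B ** K \<theta>) *v x r) (at r)" by simp
  qed (use assms in auto)
qed

lemma norm_x_before_tau_1:
  assumes "s \<in> {0..\<tau> 1}" shows "norm (x s) \<le> sqrt (a + (M th0)\<^sup>2) * norm x0"
  using norm_x_le_trigger_level[of 0 s] assms x0_ne_0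
  by (simp add: tau_0 x_0 th_0 trigger_level_def mult.commute)

lemma norm_x_le_exponential:
  assumes stable: "\<And>t. 0 \<le> t \<Longrightarrow>
      mat_norm (mat_exp (t *\<^sub>R (Apar A C \<theta> + B ** K \<theta>))) \<le> exp (- \<omega> * t) * M \<theta>"
    and "0 \<le> \<omega>" "0 \<le> t"
  shows "norm (x t) \<le> exp (\<omega> * T) * M \<theta> * sqrt (a + (M th0)\<^sup>2) * exp (- \<omega> * t) * norm x0"
proof -
  define c where "c = sqrt (a + (M th0)\<^sup>2)"
  define P where "P = M \<theta> * c * norm x0"
  have "1 \<le> M \<theta>" by (rule M_ge_1)
  moreover have "0 \<le> c" using a_pos by (simp add: c_def)
  ultimately have "0 \<le> P" by (simp add: P_def)
  have "norm (x t) \<le> exp (- \<omega> * (t - \<tau> 1)) * P"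
  proof (cases "t \<le> \<tau> 1")
    case True
    have "norm (x t) \<le> 1 * c * norm x0" using norm_x_before_tau_1[of t] True \<open>0 \<le> t\<close> by (simp add: c_def)
    also have "\<dots> \<le> M \<theta> * c * norm x0"
      using \<open>1 \<le> M \<theta>\<close> \<open>0 \<le> c\<close> by (intro mult_right_mono) auto
    also have "\<dots> \<le> exp (- \<omega> * (t - \<tau> 1)) * P"
    proof -
      have "0 \<le> - \<omega> * (t - \<tau> 1)" using True \<open>0 \<le> \<omega>\<close> by (simp add: mult_nonneg_nonpos)
      then have "1 \<le> exp (- \<omega> * (t - \<tau> 1))" by simp
      from mult_right_mono[OF this \<open>0 \<le> P\<close>] show ?thesis by (simp add: P_def)
    qed
    finally show ?thesis .
  next
    case False
    let ?E = "mat_exp ((t - \<tau> 1) *\<^sub>R (Apar A C \<theta> + B ** K \<theta>))"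
    have "x t = ?E *v x (\<tau> 1)" using False by (intro x_after_tau_1) simp
    then have "norm (x t) \<le> mat_norm ?E * norm (x (\<tau> 1))"
      unfolding mat_norm_def by (simp add: onorm[OF matrix_vector_mul_bounded_linear])
    also have "\<dots> \<le> (exp (- \<omega> * (t - \<tau> 1)) * M \<theta>) * (c * norm x0)"
      using False \<open>1 \<le> M \<theta>\<close> unfolding c_def
      by (intro mult_mono stable norm_x_before_tau_1) (auto simp: tau_nonneg)
    finally show ?thesis by (simp add: P_def mult_ac)
  qed
  also have "\<dots> \<le> exp (\<omega> * T - \<omega> * t) * P"
  proof (intro mult_right_mono \<open>0 \<le> P\<close>)
    have "\<omega> * \<tau> 1 \<le> \<omega> * T" using tau_1_le \<open>0 \<le> \<omega>\<close> by (rule mult_left_mono)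
    then show "exp (- \<omega> * (t - \<tau> 1)) \<le> exp (\<omega> * T - \<omega> * t)" by (simp add: algebra_simps)
  qed
  also have "\<dots> = exp (\<omega> * T) * M \<theta> * c * exp (- \<omega> * t) * norm x0"
    by (simp add: P_def exp_add[symmetric] mult_ac)
  finally show ?thesis by (simp add: c_def)
qed

end

end

theorem corollary3p4:
  fixes A :: "real^'n^'n" and B :: "real^'m^'n" and C :: "'l::finite \<Rightarrow> real^'n^'n"
    and K :: "real^'l \<Rightarrow> real^'n^'m" and \<omega> :: "real^'l \<Rightarrow> real" and M :: "real^'l \<Rightarrow> real"
    and a T :: real and N :: nat
  assumes \<omega>_pos: "\<forall>v. \<omega> v > 0"
    and M_cont: "continuous_on UNIV M"
    and M_ge1: "\<forall>v. M v \<ge> 1"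
    and stab: "\<forall>v. \<forall>t\<ge>0. mat_norm (mat_exp (t *\<^sub>R (Apar A C v + B ** K v)))
                          \<le> exp (- \<omega> v * t) * M v"
    and obs: "\<forall>\<theta> \<theta>h v. \<theta>h \<noteq> \<theta> \<and> v \<noteq> 0 \<longrightarrow>
                 observable (Apar A C \<theta> + B ** K \<theta>h) (\<Sum>k\<in>UNIV. (v $ k) *\<^sub>R C k)"
    and a_pos: "a > 0" and T_pos: "T > 0" and N_gt1: "N > 1"
  shows "\<exists>Mt :: real^'l \<Rightarrow> real^'l \<Rightarrow> real.
           (\<forall>\<theta> \<theta>h. Mt \<theta> \<theta>h > 0)
         \<and> (\<forall>\<theta> th0 x0 \<tau> x u th.
              hybrid_solution A B C K M a T N \<theta> x0 th0 \<tau> x u th \<longrightarrow>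
                (\<forall>t\<ge>0. norm (x t) \<le> Mt \<theta> th0 * exp (- \<omega> \<theta> * t) * norm x0)
              \<and> (x0 \<noteq> 0 \<longrightarrow> (\<forall>t\<ge>T. th t = \<theta>)))"
proof (intro exI conjI allI impI)
  define Mt where "Mt \<theta> th0 = exp (\<omega> \<theta> * T) * M \<theta> * sqrt (a + (M th0)\<^sup>2)" for \<theta> th0 :: "real^'l"
  show "0 < Mt \<theta> th0" for \<theta> th0
    using M_ge1 a_pos by (simp add: Mt_def add_pos_nonneg less_le_trans[OF zero_less_one])
  fix \<theta> th0 x0 \<tau> x u th
  assume "hybrid_solution A B C K M a T N \<theta> x0 th0 \<tau> x u th"
  then interpret hybrid_closed_loop A B C K M a T N \<theta> x0 th0 \<tau> x u th
    using a_pos T_pos N_gt1 M_ge1 by unfold_locales auto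
  have observable_\<theta>: "observable (Apar A C \<theta> + B ** K \<theta>h) (\<Sum>k\<in>UNIV. (v $ k) *\<^sub>R C k)"
    if "\<theta>h \<noteq> \<theta>" "v \<noteq> 0" for \<theta>h v
    using obs that by blast
  show "norm (x t) \<le> Mt \<theta> th0 * exp (- \<omega> \<theta> * t) * norm x0" if "0 \<le> t" for t
  proof (cases "x0 = 0")
    case True
    then show ?thesis using x_eq_0_if_x0_eq_0 that by simp
  next
    case False
    then show ?thesis
      using norm_x_le_exponential[OF False observable_\<theta>] stab \<omega>_pos that
      by (simp add: Mt_def less_imp_le)
  qed
  show "th t = \<theta>" if "x0 \<noteq> 0" "T \<le> t" for t
    using estimate_exact_after_T[OF that(1) observable_\<theta>] that(2) by blast
qed

end
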